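(* Let $\Gamma=([n],E)$ be a simple graph, $k\ge1$ an integer, and $\mathsf{P}$ an $\mathcal{H}$-poset of the hypergraph $\mathsf{H}_k(\Gamma)$ which is not an $\mathcal{H}$-poset of $\mathsf{H}_{k+1}(\Gamma)$. Then there is an $\mathcal{H}$-poset $\mathsf{P}'$ of $\mathsf{H}_{k+1}(\Gamma)$ obtained from $\mathsf{P}$ by adding relations, i.e. $i<_{\mathsf{P}}j$ implies $i<_{\mathsf{P}'}j$ for all $i,j\in[n]$.
   Context: $\mathsf{H}_m(\Gamma)=\{S\subseteq[n]:S\neq\emptyset,\ |S|\le m+1,\ \Gamma|_S\text{ connected}\}$. A poset $\mathsf{P}$ on $[n]$ is an $\mathcal{H}$-poset of a hypergraph $\mathsf{H}$ (a set of nonempty subsets of $[n]$) if (1) for every $H\in\mathsf{H}$ the Hasse diagram of the induced subposet $\mathsf{P}|_H$ is a rooted tree (as an undirected graph it is a tree, and $\mathsf{P}|_H$ has a unique maximal element); and (2) whenever $i\lessdot_{\mathsf{P}}j$ ($i<_{\mathsf{P}}j$ with no $k$ strictly between), there exists $H\in\mathsf{H}$ with $\{i,j\}\subseteq H$. *)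

theory Defs
  imports Main
begin

definition graph_connected :: "nat set \<Rightarrow> (nat \<times> nat) set \<Rightarrow> bool" where
  "graph_connected V Ed \<longleftrightarrow>
     (\<forall>x\<in>V. \<forall>y\<in>V. (x, y) \<in> (Ed \<inter> (V \<times> V))\<^sup>*)"

definition simple_graph :: "nat \<Rightarrow> (nat \<times> nat) set \<Rightarrow> bool" where
  "simple_graph n E \<longleftrightarrow> E \<subseteq> {1..n} \<times> {1..n} \<and> sym E \<and> (\<forall>x. (x, x) \<notin> E)"

definition Hyp :: "nat \<Rightarrow> (nat \<times> nat) set \<Rightarrow> nat \<Rightarrow> nat set set" where
  "Hyp n E m = {S. S \<subseteq> {1..n} \<and> S \<noteq> {} \<and> card S \<le> m + 1 \<and> graph_connected S E}"

definition pless :: "(nat \<times> nat) set \<Rightarrow> nat \<Rightarrow> nat \<Rightarrow> bool" where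
  "pless r i j \<longleftrightarrow> (i, j) \<in> r \<and> i \<noteq> j"

definition pcovers :: "(nat \<times> nat) set \<Rightarrow> nat \<Rightarrow> nat \<Rightarrow> bool" where
  "pcovers r i j \<longleftrightarrow> pless r i j \<and> \<not> (\<exists>k. pless r i k \<and> pless r k j)"

text \<open>Tree: connected, and every edge is a bridge (undirected graph, acyclic).\<close>
definition is_tree :: "nat set \<Rightarrow> (nat \<times> nat) set \<Rightarrow> bool" where
  "is_tree V Ed \<longleftrightarrow> graph_connected V Ed \<and>
     (\<forall>a b. (a, b) \<in> Ed \<inter> (V \<times> V) \<longrightarrow>
        (a, b) \<notin> ((Ed - {(a, b), (b, a)}) \<inter> (V \<times> V))\<^sup>*)"

definition hasse_graph :: "(nat \<times> nat) set \<Rightarrow> (nat \<times> nat) set" where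
  "hasse_graph r = {(a, b). pcovers r a b \<or> pcovers r b a}"

definition rooted_tree_on :: "(nat \<times> nat) set \<Rightarrow> nat set \<Rightarrow> bool" where
  "rooted_tree_on r H \<longleftrightarrow>
     (let rH = r \<inter> (H \<times> H) in
        is_tree H (hasse_graph rH) \<and>
        (\<exists>!x. x \<in> H \<and> \<not> (\<exists>y\<in>H. pless rH x y)))"

definition H_poset :: "nat \<Rightarrow> nat set set \<Rightarrow> (nat \<times> nat) set \<Rightarrow> bool" where
  "H_poset n HH P \<longleftrightarrow> partial_order_on {1..n} P \<and>
     (\<forall>H\<in>HH. rooted_tree_on P H) \<and>
     (\<forall>i j. pcovers P i j \<longrightarrow> (\<exists>H\<in>HH. {i, j} \<subseteq> H))"

end

theory Submission
  imports Defs
begin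

text \<open>Enlarge \<open>P\<close> to a partial order \<open>Q\<close> on \<open>{1..n}\<close> that is maximal among those
  containing \<open>P\<close> whose covers all lie inside hyperedges of \<open>Hyp n E (k + 1)\<close>. If a hyperedge
  \<open>H\<close> contained two incomparable elements \<open>a\<close>, \<open>b\<close>, then adding \<open>a < b\<close> together with its
  transitive consequences would create only the single new cover \<open>a \<lessdot> b\<close>, which lies in \<open>H\<close>,
  contradicting maximality. Hence \<open>Q\<close> is a chain on every hyperedge, and the Hasse diagram of
  a finite chain is a path, a tree rooted at its top element.\<close>

lemma sym_hasse_graph: "sym (hasse_graph r)"
  unfolding hasse_graph_def sym_def by auto

lemma hasse_graph_Restr_subset: "hasse_graph (Restr Q H) \<subseteq> H \<times> H"
  unfolding hasse_graph_def pcovers_def pless_def by auto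

lemma hasse_path_if_le:
  assumes po: "partial_order_on A Q" and HA: "H \<subseteq> A" and finH: "finite H"
    and "x \<in> H" "y \<in> H" "(x, y) \<in> Q"
  shows "(x, y) \<in> (hasse_graph (Restr Q H))\<^sup>*"
  using assms(4-6)
proof (induction "card {z \<in> H. (x, z) \<in> Q \<and> (z, y) \<in> Q}" arbitrary: x y rule: less_induct)
  case less
  let ?I = "\<lambda>u v. {w \<in> H. (u, w) \<in> Q \<and> (w, v) \<in> Q}"
  have trQ: "trans Q" and antiQ: "antisym Q" and reflQ: "\<And>w. w \<in> H \<Longrightarrow> (w, w) \<in> Q"
    using partial_order_onD[OF po] HA by (auto dest: refl_onD)
  show ?case
  proof (cases "x = y \<or> pcovers (Restr Q H) x y")
    case True
    then show ?thesis
      unfolding hasse_graph_def by auto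
  next
    case False
    then obtain z where z: "z \<in> H" "(x, z) \<in> Q" "(z, y) \<in> Q" "x \<noteq> z" "z \<noteq> y"
      using less.prems unfolding pcovers_def pless_def by auto
    have "?I x z \<subseteq> ?I x y" "?I z y \<subseteq> ?I x y"
      using z trQ by (auto dest: transD)
    moreover have "y \<in> ?I x y - ?I x z" "x \<in> ?I x y - ?I z y"
      using z less.prems reflQ antiQ by (auto dest: antisymD)
    ultimately have "?I x z \<subset> ?I x y" "?I z y \<subset> ?I x y"
      by blast+
    then have "card (?I x z) < card (?I x y)" "card (?I z y) < card (?I x y)"
      using finH by (simp_all add: psubset_card_mono)
    then show ?thesis
      using less z by (meson rtrancl_trans)
  qed
qed

lemma pcovers_chain_unique:
  assumes chain: "total_on H Q"
    and "pcovers (Restr Q H) a b" "pcovers (Restr Q H) a c"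
  shows "b = c"
proof (rule ccontr)
  assume "b \<noteq> c"
  moreover have "b \<in> H" "c \<in> H"
    using assms(2,3) unfolding pcovers_def pless_def by auto
  ultimately have "pless (Restr Q H) b c \<or> pless (Restr Q H) c b"
    using chain unfolding total_on_def pless_def by auto
  then show False
    using assms(2,3) unfolding pcovers_def by blast
qed

lemma pcovers_chain_le:
  assumes chain: "total_on H Q" and refl: "refl_on H Q"
    and "pcovers (Restr Q H) u v" "pless (Restr Q H) u a"
  shows "(v, a) \<in> Q"
proof (rule ccontr)
  assume "(v, a) \<notin> Q"
  moreover have "v \<in> H" "a \<in> H"
    using assms(3,4) unfolding pcovers_def pless_def by auto
  ultimately have "pless (Restr Q H) a v"
    using chain refl unfolding total_on_def refl_on_def pless_def by (cases "a = v") auto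
  then show False
    using assms(3,4) unfolding pcovers_def by blast
qed

lemma hasse_path_avoiding_cover_stays_below:
  assumes po: "partial_order_on A Q" and HA: "H \<subseteq> A" and chain: "total_on H Q"
    and cover: "pcovers (Restr Q H) a b"
    and "(a, w) \<in> (hasse_graph (Restr Q H) - {(a, b), (b, a)})\<^sup>*"
  shows "(w, a) \<in> Q"
proof -
  let ?r = "Restr Q H"
  have reflQ: "refl_on H Q"
    using partial_order_onD(1)[OF po] HA unfolding refl_on_def by blast
  from assms(5) show ?thesis
  proof (induction rule: rtrancl_induct)
    case base
    show ?case
      using cover reflQ unfolding pcovers_def pless_def refl_on_def by auto
  next
    case (step u v)
    have edge: "pcovers ?r v u \<or> pcovers ?r u v" "(u, v) \<noteq> (a, b)"
      using step.hyps(2) unfolding hasse_graph_def by auto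
    moreover have "u \<in> H" "a \<in> H"
      using edge(1) cover unfolding pcovers_def pless_def by auto
    ultimately consider "pcovers ?r v u" | "pcovers ?r u v" "u = a"
      | "pcovers ?r u v" "pless ?r u a"
      using step.IH unfolding pless_def by auto
    then show ?case
    proof cases
      case 1
      then show ?thesis
        using step.IH partial_order_onD(2)[OF po] unfolding pcovers_def pless_def
        by (auto dest: transD)
    next
      case 2
      then show ?thesis
        using edge(2) pcovers_chain_unique[OF chain cover] by auto
    next
      case 3
      then show ?thesis
        by (rule pcovers_chain_le[OF chain reflQ])
    qed
  qed
qed

lemma hasse_graph_chain_edge_is_bridge:
  assumes po: "partial_order_on A Q" and HA: "H \<subseteq> A" and chain: "total_on H Q"
    and ab: "(a, b) \<in> hasse_graph (Restr Q H)"
  shows "(a, b) \<notin> (hasse_graph (Restr Q H) - {(a, b), (b, a)})\<^sup>*"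
proof -
  let ?G = "\<lambda>a b. hasse_graph (Restr Q H) - {(a, b), (b, a)}"
  have no_path_up: "(a, b) \<notin> (?G a b)\<^sup>*" if cover: "pcovers (Restr Q H) a b" for a b
    using hasse_path_avoiding_cover_stays_below[OF po HA chain cover] cover
      partial_order_onD(3)[OF po] unfolding pcovers_def pless_def by (auto dest: antisymD)
  have "sym (?G a b)"
    using sym_hasse_graph unfolding sym_def by blast
  moreover have "?G b a = ?G a b"
    by blast
  ultimately have "(b, a) \<in> (?G b a)\<^sup>*" if "(a, b) \<in> (?G a b)\<^sup>*"
    using that symD[OF sym_rtrancl] by metis
  then show ?thesis
    using ab no_path_up unfolding hasse_graph_def by blast
qed

lemma graph_connected_hasse_graph_chain:
  assumes po: "partial_order_on A Q" and HA: "H \<subseteq> A" and finH: "finite H"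
    and chain: "total_on H Q"
  shows "graph_connected H (hasse_graph (Restr Q H))"
  unfolding graph_connected_def Int_absorb2[OF hasse_graph_Restr_subset]
proof (intro ballI)
  fix x y
  assume "x \<in> H" "y \<in> H"
  then consider "(x, y) \<in> Q" | "(y, x) \<in> Q"
    using chain refl_onD[OF partial_order_onD(1)[OF po]] HA unfolding total_on_def
    by (cases "x = y") auto
  then show "(x, y) \<in> (hasse_graph (Restr Q H))\<^sup>*"
  proof cases
    case 1
    then show ?thesis
      using hasse_path_if_le[OF po HA finH \<open>x \<in> H\<close> \<open>y \<in> H\<close>] by blast
  next
    case 2
    then have "(y, x) \<in> (hasse_graph (Restr Q H))\<^sup>*"
      using hasse_path_if_le[OF po HA finH \<open>y \<in> H\<close> \<open>x \<in> H\<close>] by blast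
    then show ?thesis
      using symD[OF sym_rtrancl[OF sym_hasse_graph]] by blast
  qed
qed

lemma ex1_maximal_in_chain:
  assumes po: "partial_order_on A Q" and finH: "finite H" and "H \<noteq> {}"
    and chain: "total_on H Q"
  shows "\<exists>!x. x \<in> H \<and> \<not> (\<exists>y\<in>H. pless (Restr Q H) x y)"
proof -
  let ?less = "pless (Restr Q H)"
  have "asymp_on H ?less" "transp_on H ?less"
    using partial_order_onD(2,3)[OF po]
    unfolding asymp_on_def transp_on_def pless_def by (auto dest: antisymD transD)
  then obtain m where m: "m \<in> H" "\<forall>y\<in>H. y \<noteq> m \<longrightarrow> \<not> ?less m y"
    using Finite_Set.bex_max_element[OF finH] \<open>H \<noteq> {}\<close> by blast
  have "\<not> (\<exists>y\<in>H. ?less m y)"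
    using m unfolding pless_def by auto
  moreover have "x = m" if "x \<in> H" "\<not> (\<exists>y\<in>H. ?less x y)" for x
  proof (rule ccontr)
    assume "x \<noteq> m"
    then have "?less x m \<or> ?less m x"
      using chain m(1) that(1) unfolding total_on_def pless_def by auto
    then show False
      using m that \<open>x \<noteq> m\<close> by blast
  qed
  ultimately show ?thesis
    using m(1) by blast
qed

lemma rooted_tree_on_chain:
  assumes po: "partial_order_on A Q" and HA: "H \<subseteq> A" and "H \<noteq> {}"
    and finH: "finite H" and chain: "total_on H Q"
  shows "rooted_tree_on Q H"
  unfolding rooted_tree_on_def Let_def is_tree_def Int_absorb2[OF hasse_graph_Restr_subset]
    Int_absorb2[OF subset_trans[OF Diff_subset hasse_graph_Restr_subset]]
  using graph_connected_hasse_graph_chain[OF po HA finH chain]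
    hasse_graph_chain_edge_is_bridge[OF po HA chain]
    ex1_maximal_in_chain[OF po finH \<open>H \<noteq> {}\<close> chain]
  by blast

definition covers_in :: "nat set set \<Rightarrow> (nat \<times> nat) set \<Rightarrow> bool" where
  "covers_in HH Q \<longleftrightarrow> (\<forall>i j. pcovers Q i j \<longrightarrow> (\<exists>H\<in>HH. {i, j} \<subseteq> H))"

definition extend_order :: "(nat \<times> nat) set \<Rightarrow> nat \<Rightarrow> nat \<Rightarrow> (nat \<times> nat) set" where
  "extend_order Q a b = Q \<union> {(x, y). (x, a) \<in> Q \<and> (b, y) \<in> Q}"

lemma subset_extend_order: "Q \<subseteq> extend_order Q a b"
  unfolding extend_order_def by blast

lemma partial_order_on_extend_order:
  assumes po: "partial_order_on A Q" and "a \<in> A" "b \<in> A" "(b, a) \<notin> Q"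
  shows "partial_order_on A (extend_order Q a b)" and "(a, b) \<in> extend_order Q a b"
proof -
  have QA: "Q \<subseteq> A \<times> A" and reflQ: "refl_on A Q" and antiQ: "antisym Q"
    and trQ: "\<And>x y z. (x, y) \<in> Q \<Longrightarrow> (y, z) \<in> Q \<Longrightarrow> (x, z) \<in> Q"
    using partial_order_onD[OF po] by (auto dest: transD)
  show "(a, b) \<in> extend_order Q a b"
    using reflQ assms(2,3) unfolding extend_order_def by (auto dest: refl_onD)
  show "partial_order_on A (extend_order Q a b)"
    unfolding partial_order_on_def preorder_on_def
  proof (intro conjI)
    show "refl_on A (extend_order Q a b)"
      using reflQ unfolding refl_on_def extend_order_def by blast
    show "extend_order Q a b \<subseteq> A \<times> A"
      using QA unfolding extend_order_def by blast
    show "trans (extend_order Q a b)"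
      using trQ assms(4) unfolding trans_def extend_order_def by blast
    show "antisym (extend_order Q a b)"
      using trQ assms(4) antisymD[OF antiQ] unfolding antisym_def extend_order_def by blast
  qed
qed

lemma pcovers_extend_order:
  assumes po: "partial_order_on A Q" and "a \<in> A" "b \<in> A"
    and cover: "pcovers (extend_order Q a b) i j"
  shows "pcovers Q i j \<or> (i = a \<and> j = b)"
proof (cases "(i, j) \<in> Q")
  case True
  then show ?thesis
    using cover subset_extend_order unfolding pcovers_def pless_def by blast
next
  case False
  have reflQ: "\<And>x. x \<in> A \<Longrightarrow> (x, x) \<in> Q"
    and trQ: "\<And>x y z. (x, y) \<in> Q \<Longrightarrow> (y, z) \<in> Q \<Longrightarrow> (x, z) \<in> Q"
    using partial_order_onD[OF po] by (auto dest: refl_onD transD)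
  have ia: "(i, a) \<in> Q" and bj: "(b, j) \<in> Q"
    using cover False unfolding pcovers_def pless_def extend_order_def by auto
  have aj: "(a, j) \<in> extend_order Q a b" and ab: "(a, b) \<in> extend_order Q a b"
    using bj reflQ \<open>a \<in> A\<close> \<open>b \<in> A\<close> unfolding extend_order_def by auto
  have "i = a"
  proof (rule ccontr)
    assume "i \<noteq> a"
    moreover have "a \<noteq> j"
      using False ia by auto
    ultimately have "pless (extend_order Q a b) i a" "pless (extend_order Q a b) a j"
      using ia aj subset_extend_order unfolding pless_def by auto
    then show False
      using cover unfolding pcovers_def by blast
  qed
  moreover have "j = b"
  proof (rule ccontr)
    assume "j \<noteq> b"
    moreover have "a \<noteq> b"
      using False ia bj trQ by blast
    ultimately have "pless (extend_order Q a b) a b" "pless (extend_order Q a b) b j"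
      using ab bj subset_extend_order unfolding pless_def by auto
    then show False
      using cover \<open>i = a\<close> unfolding pcovers_def by blast
  qed
  ultimately show ?thesis
    by blast
qed

lemma total_on_hyperedge_if_maximal:
  assumes po: "partial_order_on A Q" and cov: "covers_in HH Q" and "H \<in> HH" "H \<subseteq> A"
    and maximal: "\<And>Q'. partial_order_on A Q' \<Longrightarrow> covers_in HH Q' \<Longrightarrow> Q \<subseteq> Q' \<Longrightarrow> Q' = Q"
  shows "total_on H Q"
  unfolding total_on_def
proof (intro ballI impI)
  fix a b
  assume "a \<in> H" "b \<in> H" "a \<noteq> b"
  show "(a, b) \<in> Q \<or> (b, a) \<in> Q"
  proof (rule ccontr)
    assume incomparable: "\<not> ((a, b) \<in> Q \<or> (b, a) \<in> Q)"
    have "a \<in> A" "b \<in> A"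
      using \<open>a \<in> H\<close> \<open>b \<in> H\<close> \<open>H \<subseteq> A\<close> by auto
    note ext = partial_order_on_extend_order[OF po \<open>a \<in> A\<close> \<open>b \<in> A\<close>]
    have "covers_in HH (extend_order Q a b)"
      unfolding covers_in_def
    proof (intro allI impI)
      fix i j
      assume "pcovers (extend_order Q a b) i j"
      then have "pcovers Q i j \<or> (i = a \<and> j = b)"
        by (rule pcovers_extend_order[OF po \<open>a \<in> A\<close> \<open>b \<in> A\<close>])
      then show "\<exists>H\<in>HH. {i, j} \<subseteq> H"
        using cov \<open>H \<in> HH\<close> \<open>a \<in> H\<close> \<open>b \<in> H\<close> unfolding covers_in_def by blast
    qed
    then have "extend_order Q a b = Q"
      using maximal ext(1) incomparable subset_extend_order by blast
    then show False
      using ext incomparable by auto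
  qed
qed

lemma exists_H_poset_extension:
  assumes "partial_order_on {1..n} P" and "covers_in HH P"
    and hyperedges: "\<And>H. H \<in> HH \<Longrightarrow> H \<subseteq> {1..n} \<and> H \<noteq> {}"
  shows "\<exists>Q. H_poset n HH Q \<and> P \<subseteq> Q"
proof -
  let ?F = "{Q. partial_order_on {1..n} Q \<and> covers_in HH Q \<and> P \<subseteq> Q}"
  have "?F \<subseteq> Pow ({1..n} \<times> {1..n})"
    using partial_order_onD(4) by auto
  then have "finite ?F"
    by (rule finite_subset) simp
  moreover have "P \<in> ?F"
    using assms(1,2) by simp
  ultimately obtain Q where "Q \<in> ?F" and maximal: "\<And>Q'. Q' \<in> ?F \<Longrightarrow> Q \<subseteq> Q' \<Longrightarrow> Q' = Q"
    using finite_has_maximal2[of ?F P] by (metis (no_types, lifting))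
  then have po: "partial_order_on {1..n} Q" and cov: "covers_in HH Q" and "P \<subseteq> Q"
    by auto
  have "rooted_tree_on Q H" if "H \<in> HH" for H
  proof (rule rooted_tree_on_chain[OF po])
    show "H \<subseteq> {1..n}" "H \<noteq> {}" "finite H"
      using hyperedges[OF that] finite_subset by auto
    show "total_on H Q"
      using total_on_hyperedge_if_maximal[OF po cov that \<open>H \<subseteq> {1..n}\<close>] maximal \<open>P \<subseteq> Q\<close>
      by blast
  qed
  then show ?thesis
    using po cov \<open>P \<subseteq> Q\<close> unfolding H_poset_def covers_in_def by blast
qed

theorem mainTheorem10:
  fixes n k :: nat and E P :: "(nat \<times> nat) set"
  assumes "simple_graph n E"
    and "k \<ge> 1"
    and "H_poset n (Hyp n E k) P"
    and "\<not> H_poset n (Hyp n E (k + 1)) P"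
  shows "\<exists>P'. H_poset n (Hyp n E (k + 1)) P' \<and>
           (\<forall>i\<in>{1..n}. \<forall>j\<in>{1..n}. pless P i j \<longrightarrow> pless P' i j)"
proof -
  have "Hyp n E k \<subseteq> Hyp n E (k + 1)"
    unfolding Hyp_def by auto
  then have "covers_in (Hyp n E (k + 1)) P"
    using assms(3) unfolding H_poset_def covers_in_def by blast
  moreover have "partial_order_on {1..n} P"
    using assms(3) unfolding H_poset_def by blast
  moreover have "H \<subseteq> {1..n} \<and> H \<noteq> {}" if "H \<in> Hyp n E (k + 1)" for H
    using that unfolding Hyp_def by blast
  ultimately obtain Q where "H_poset n (Hyp n E (k + 1)) Q" "P \<subseteq> Q"
    using exists_H_poset_extension by metis
  then show ?thesis
    unfolding pless_def by blast
qed

end
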